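(* Let $K\ge2$, $\mathcal{M}=\mathcal{L}^K$, and for each $j$ let $\mathcal{A}_j=\{\nu\in\mathcal{M}:c_\pi(\nu_j)<c_\pi(\nu_i)\ \forall i\ne j\}$ and $\mathcal{A}_j^c=\mathcal{M}\setminus\mathcal{A}_j$. Let $\mu\in\mathcal{A}_1$ and $t\in\Sigma_K$. Then \[\inf_{\nu\in\mathcal{A}_1^c}\sum_{a=1}^K t_a\mathrm{KL}(\mu_a,\nu_a)=\min_{j\ne1}\ \inf_{x\le y}\big\{t_1\mathrm{KL}^U_{\inf}(\mu_1,y)+t_j\mathrm{KL}^L_{\inf}(\mu_j,x)\big\},\] and hence $V(\mu):=\sup_{t\in\Sigma_K}\inf_{\nu\in\mathcal{A}_1^c}\sum_a t_a\mathrm{KL}(\mu_a,\nu_a)=\sup_{t\in\Sigma_K}\min_{j\ne1}\inf_{x\le y}\{t_1\mathrm{KL}^U_{\inf}(\mu_1,y)+t_j\mathrm{KL}^L_{\inf}(\mu_j,x)\}$.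
   Context: $\pi\in(0,1)$, $\epsilon>0$, $B>0$. $\mathcal{L}=\{\eta\in\mathcal{P}(\mathbb{R}):\mathbb{E}_\eta|X|^{1+\epsilon}\le B\}$. $F_\eta(x)=\eta((-\infty,x])$, $x_\pi(\eta)=\min\{z:F_\eta(z)\ge\pi\}$, $c_\pi(\eta)=\frac{F_\eta(x_\pi(\eta))-\pi}{1-\pi}x_\pi(\eta)+\frac{1}{1-\pi}\int_{(x_\pi(\eta),\infty)}y\,dF_\eta(y)$. $\Sigma_K$ is the probability simplex in $\mathbb{R}^K$. $\mathrm{KL}(\eta,\kappa)=\int\log\frac{d\eta}{d\kappa}d\eta$ if $\eta\ll\kappa$, else $+\infty$. $\mathrm{KL}^U_{\inf}(\eta,x)=\inf\{\mathrm{KL}(\eta,\kappa):\kappa\in\mathcal{L},c_\pi(\kappa)\ge x\}$, $\mathrm{KL}^L_{\inf}(\eta,x)=\inf\{\mathrm{KL}(\eta,\kappa):\kappa\in\mathcal{L},c_\pi(\kappa)\le x\}$. *)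

theory Defs
  imports "HOL-Probability.Probability"
begin

definition prob_real :: "real measure \<Rightarrow> bool" where
  "prob_real \<eta> \<longleftrightarrow> prob_space \<eta> \<and> sets \<eta> = sets borel"

definition Lclass :: "real \<Rightarrow> real \<Rightarrow> real measure set" where
  "Lclass eps B = {\<eta>. prob_real \<eta> \<and>
      (\<integral>\<^sup>+ x. ennreal (\<bar>x\<bar> powr (1 + eps)) \<partial>\<eta>) \<le> ennreal B}"

definition cdf_of :: "real measure \<Rightarrow> real \<Rightarrow> real" where
  "cdf_of \<eta> x = measure \<eta> {..x}"

definition quant :: "real \<Rightarrow> real measure \<Rightarrow> real" where
  "quant p \<eta> = Inf {z. cdf_of \<eta> z \<ge> p}"

definition cvar :: "real \<Rightarrow> real measure \<Rightarrow> real" where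
  "cvar p \<eta> = (cdf_of \<eta> (quant p \<eta>) - p) / (1 - p) * quant p \<eta>
      + 1 / (1 - p) * (LINT y:{quant p \<eta><..}|\<eta>. y)"

definition KL :: "real measure \<Rightarrow> real measure \<Rightarrow> ereal" where
  "KL \<eta> \<kappa> = (if absolutely_continuous \<kappa> \<eta> then
      enn2ereal (\<integral>\<^sup>+ x. ennreal (max 0 (ln (enn2real (RN_deriv \<kappa> \<eta> x)))) \<partial>\<eta>)
      - enn2ereal (\<integral>\<^sup>+ x. ennreal (max 0 (- ln (enn2real (RN_deriv \<kappa> \<eta> x)))) \<partial>\<eta>)
    else \<infinity>)"

definition KLinfU :: "real \<Rightarrow> real \<Rightarrow> real \<Rightarrow> real measure \<Rightarrow> real \<Rightarrow> ereal" where
  "KLinfU p eps B \<eta> x = (INF \<kappa>\<in>{\<kappa>\<in>Lclass eps B. cvar p \<kappa> \<ge> x}. KL \<eta> \<kappa>)"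

definition KLinfL :: "real \<Rightarrow> real \<Rightarrow> real \<Rightarrow> real measure \<Rightarrow> real \<Rightarrow> ereal" where
  "KLinfL p eps B \<eta> x = (INF \<kappa>\<in>{\<kappa>\<in>Lclass eps B. cvar p \<kappa> \<le> x}. KL \<eta> \<kappa>)"

definition models :: "real \<Rightarrow> real \<Rightarrow> nat \<Rightarrow> (nat \<Rightarrow> real measure) set" where
  "models eps B K = {\<nu>. \<forall>i\<in>{1..K}. \<nu> i \<in> Lclass eps B}"

definition Aset :: "real \<Rightarrow> real \<Rightarrow> real \<Rightarrow> nat \<Rightarrow> nat \<Rightarrow> (nat \<Rightarrow> real measure) set" where
  "Aset p eps B K j = {\<nu>\<in>models eps B K.
      \<forall>i\<in>{1..K}. i \<noteq> j \<longrightarrow> cvar p (\<nu> j) < cvar p (\<nu> i)}"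

definition prob_simplex :: "nat \<Rightarrow> (nat \<Rightarrow> real) set" where
  "prob_simplex K = {t. (\<forall>a\<in>{1..K}. t a \<ge> 0) \<and> (\<Sum>a=1..K. t a) = 1}"

end

theory Submission
  imports Defs
begin

text \<open>A model \<open>\<nu>\<close> lies outside \<open>\<A>\<^sub>1\<close> exactly when some arm \<open>j \<noteq> 1\<close> has
  \<open>cvar(\<nu> j) \<le> cvar(\<nu> 1)\<close>. Since KL divergences are nonnegative, dropping all other arms gives the
  lower bound \<open>t 1 * KLinfU(\<mu> 1, y) + t j * KLinfL(\<mu> j, x)\<close> with \<open>x = cvar(\<nu> j) \<le> y = cvar(\<nu> 1)\<close>.
  Conversely, replacing only arms 1 and \<open>j\<close> of \<open>\<mu>\<close> by measures with CVaR at least \<open>y\<close>, resp. at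
  most \<open>x\<close>, yields an alternative whose other arms contribute \<open>KL(\<mu>\<^sub>a, \<mu>\<^sub>a) = 0\<close>.\<close>

lemma mult_max_0_neg_ln_le_1:
  fixes d :: real
  assumes "0 \<le> d"
  shows "d * max 0 (- ln d) \<le> 1"
proof (cases "d = 0")
  case False
  then have d: "0 < d" using assms by simp
  have "d * (- ln d) = d * ln (1 / d)" using d by (simp add: ln_div)
  also have "\<dots> \<le> d * (1 / d - 1)" using d by (intro mult_left_mono ln_le_minus_one) auto
  also have "\<dots> \<le> 1" using d by (simp add: field_simps)
  finally show ?thesis using d by (simp add: max_def)
qed simp

lemma (in finite_measure) nn_integral_neg_ln_RN_deriv_le:
  assumes "absolutely_continuous M N" "sets N = sets M"
  shows "(\<integral>\<^sup>+x. ennreal (max 0 (- ln (enn2real (RN_deriv M N x)))) \<partial>N) \<le> emeasure M (space M)"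
proof -
  \<comment> \<open>At \<open>r = \<infinity>\<close> the product vanishes, as \<open>enn2real \<infinity> = 0\<close> and \<open>ln 0 = 0\<close>.\<close>
  have bound: "r * ennreal (max 0 (- ln (enn2real r))) \<le> 1" for r :: ennreal
  proof (cases r)
    case (real d)
    then have "r * ennreal (max 0 (- ln (enn2real r))) = ennreal (d * max 0 (- ln d))"
      by (simp add: ennreal_mult)
    then show ?thesis using mult_max_0_neg_ln_le_1[of d] real by (simp add: ennreal_le_1)
  qed simp
  have "(\<integral>\<^sup>+x. ennreal (max 0 (- ln (enn2real (RN_deriv M N x)))) \<partial>N)
      = (\<integral>\<^sup>+x. RN_deriv M N x * ennreal (max 0 (- ln (enn2real (RN_deriv M N x)))) \<partial>M)"
    using assms by (intro RN_deriv_nn_integral) auto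
  also have "\<dots> \<le> (\<integral>\<^sup>+x. 1 \<partial>M)" by (intro nn_integral_mono bound)
  finally show ?thesis by simp
qed

lemma (in sigma_finite_measure) density_enn2real_RN_deriv:
  assumes "sigma_finite_measure N" "absolutely_continuous M N" "sets N = sets M"
  shows "density M (\<lambda>x. ennreal (enn2real (RN_deriv M N x))) = N"
proof -
  have "density M (\<lambda>x. ennreal (enn2real (RN_deriv M N x))) = density M (RN_deriv M N)"
    using RN_deriv_finite[OF assms] by (intro density_cong) (auto simp: less_top elim!: AE_mp)
  also have "\<dots> = N" using assms(2,3) by (rule density_RN_deriv)
  finally show ?thesis .
qed

lemma KL_eq_integral_ln_RN_deriv:
  assumes "absolutely_continuous \<kappa> \<eta>"
    and int: "integrable \<eta> (\<lambda>x. ln (enn2real (RN_deriv \<kappa> \<eta> x)))"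
  shows "KL \<eta> \<kappa> = ereal (\<integral>x. ln (enn2real (RN_deriv \<kappa> \<eta> x)) \<partial>\<eta>)"
proof -
  define P where "P = (\<integral>\<^sup>+x. ennreal (ln (enn2real (RN_deriv \<kappa> \<eta> x))) \<partial>\<eta>)"
  define N where "N = (\<integral>\<^sup>+x. ennreal (- ln (enn2real (RN_deriv \<kappa> \<eta> x))) \<partial>\<eta>)"
  have "P \<noteq> \<infinity>" "N \<noteq> \<infinity>" using int by (simp_all add: real_integrable_def P_def N_def)
  moreover have "enn2ereal x = ereal (enn2real x)" if "x \<noteq> \<infinity>" for x :: ennreal
    using that by (cases x rule: ennreal_cases) auto
  ultimately have "enn2ereal P = ereal (enn2real P)" "enn2ereal N = ereal (enn2real N)"
    by auto
  then show ?thesis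
    using assms by (simp add: KL_def ennreal_max_0 real_lebesgue_integral_def P_def N_def)
qed

lemma KL_nonneg:
  assumes "prob_real \<eta>" "prob_real \<kappa>"
  shows "0 \<le> KL \<eta> \<kappa>"
proof (cases "absolutely_continuous \<kappa> \<eta>")
  case False
  then show ?thesis by (simp add: KL_def)
next
  case ac: True
  interpret K: prob_space \<kappa> using assms(2) by (simp add: prob_real_def)
  interpret E: prob_space \<eta> using assms(1) by (simp add: prob_real_def)
  interpret IS: information_space \<kappa> "exp 1" by unfold_locales simp
  have sets: "sets \<eta> = sets \<kappa>" using assms by (simp add: prob_real_def)
  define D where "D x = enn2real (RN_deriv \<kappa> \<eta> x)" for x
  have [measurable]: "D \<in> borel_measurable \<kappa>"
    unfolding D_def by measurable
  then have [measurable]: "D \<in> borel_measurable \<eta>"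
    using sets by (simp cong: measurable_cong_sets)
  have dens: "density \<kappa> D = \<eta>"
    unfolding D_def using ac sets by (intro K.density_enn2real_RN_deriv) unfold_locales
  \<comment> \<open>The negative part is finite, so \<open>KL\<close> is either \<open>\<infinity>\<close> or the library's \<open>KL_divergence\<close> to base \<open>e\<close>.\<close>
  have neg_fin: "(\<integral>\<^sup>+x. ennreal (max 0 (- ln (D x))) \<partial>\<eta>) \<noteq> \<infinity>"
    using K.nn_integral_neg_ln_RN_deriv_le[OF ac sets]
    by (auto simp: D_def K.emeasure_space_1 top_unique)
  show ?thesis
  proof (cases "integrable \<eta> (\<lambda>x. ln (D x))")
    case False
    then have "(\<integral>\<^sup>+x. ennreal (max 0 (ln (D x))) \<partial>\<eta>) = \<infinity>"
      using neg_fin by (auto simp: real_integrable_def ennreal_max_0)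
    then show ?thesis using ac neg_fin by (simp add: KL_def D_def)
  next
    case int: True
    have "integrable \<kappa> (\<lambda>x. D x * log (exp 1) (D x))"
      using int K.RN_deriv_integrable[OF E.sigma_finite_measure_axioms ac sets, of "\<lambda>x. ln (D x)"]
      by (simp add: D_def log_def)
    then have "0 \<le> KL_divergence (exp 1) \<kappa> (density \<kappa> D)"
      using dens E.prob_space_axioms by (intro IS.KL_nonneg) (auto simp: D_def)
    also have "KL_divergence (exp 1) \<kappa> (density \<kappa> D) = (\<integral>x. ln (D x) \<partial>\<eta>)"
      unfolding dens KL_divergence_def entropy_density_def by (simp add: D_def log_def comp_def)
    finally show ?thesis
      using KL_eq_integral_ln_RN_deriv[OF ac] int by (simp add: D_def)
  qed
qed

lemma KL_self:
  assumes "prob_real \<eta>"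
  shows "KL \<eta> \<eta> = 0"
proof -
  interpret E: prob_space \<eta> using assms by (simp add: prob_real_def)
  have "AE x in \<eta>. 1 = RN_deriv \<eta> \<eta> x"
    by (rule E.RN_deriv_unique) (auto simp: density_1)
  then have "AE x in \<eta>. enn2real (RN_deriv \<eta> \<eta> x) = 1"
    by eventually_elim (metis enn2real_1)
  then have "(\<integral>\<^sup>+x. ennreal (max 0 (ln (enn2real (RN_deriv \<eta> \<eta> x)))) \<partial>\<eta>) = 0"
    and "(\<integral>\<^sup>+x. ennreal (max 0 (- ln (enn2real (RN_deriv \<eta> \<eta> x)))) \<partial>\<eta>) = 0"
    by (auto intro!: nn_integral_0_iff_AE[THEN iffD2] elim!: AE_mp)
  then show ?thesis by (simp add: KL_def absolutely_continuous_def)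
qed

lemma ereal_mult_INF:
  assumes "0 < a"
  shows "ereal a * (INF s\<in>S. f s) = (INF s\<in>S. ereal a * f s)"
  using ereal_Inf_cmult[OF assms, of "\<lambda>x. x \<in> f ` S"]
  by (simp add: setcompr_eq_image image_image)

lemma ereal_le_mult_INF:
  assumes "0 \<le> a" "\<And>s. s \<in> S \<Longrightarrow> c \<le> ereal a * f s" "a = 0 \<Longrightarrow> c \<le> 0"
  shows "c \<le> ereal a * (INF s\<in>S. f s)"
proof (cases "a = 0")
  case False
  then show ?thesis
    using assms by (simp add: ereal_mult_INF INF_greatest)
qed (use assms in \<open>simp add: zero_ereal_def[symmetric]\<close>)

lemma ereal_le_INF_add_INF:
  fixes F :: "'a \<Rightarrow> ereal" and G :: "'b \<Rightarrow> ereal"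
  assumes le: "\<And>s u. s \<in> S \<Longrightarrow> u \<in> T \<Longrightarrow> c \<le> F s + G u"
    and F: "\<And>s. s \<in> S \<Longrightarrow> 0 \<le> F s" and G: "\<And>u. u \<in> T \<Longrightarrow> 0 \<le> G u"
  shows "c \<le> (INF s\<in>S. F s) + (INF u\<in>T. G u)"
proof -
  have INF_F: "0 \<le> (INF s\<in>S. F s)" and INF_G: "0 \<le> (INF u\<in>T. G u)"
    using F G by (auto intro: INF_greatest)
  consider "S = {}" | "T = {}" | "S \<noteq> {}" "T \<noteq> {}" by blast
  then show ?thesis
  proof cases
    case 1
    then show ?thesis using INF_G by (simp add: top_ereal_def)
  next
    case 2
    then show ?thesis using INF_F by (simp add: top_ereal_def)
  next
    case 3
    have "c \<le> (INF s\<in>S. INF u\<in>T. F s + G u)"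
      using le by (auto intro!: INF_greatest)
    also have "\<dots> = (INF s\<in>S. F s + (INF u\<in>T. G u))"
      using 3 F G by (intro INF_cong refl INF_ereal_add_right) auto
    also have "\<dots> = (INF s\<in>S. F s) + (INF u\<in>T. G u)"
      using 3 F INF_G by (intro INF_ereal_add_left) auto
    finally show ?thesis .
  qed
qed

lemma prob_real_if_Lclass: "\<kappa> \<in> Lclass eps B \<Longrightarrow> prob_real \<kappa>"
  by (simp add: Lclass_def)

lemma prob_simplex_nonneg: "t \<in> prob_simplex K \<Longrightarrow> a \<in> {1..K} \<Longrightarrow> 0 \<le> t a"
  by (simp add: prob_simplex_def)

lemma weighted_KL_nonneg:
  assumes "t \<in> prob_simplex K" "a \<in> {1..K}" "\<mu> \<in> models eps B K" "\<kappa> \<in> Lclass eps B"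
  shows "0 \<le> ereal (t a) * KL (\<mu> a) \<kappa>"
proof -
  have "\<mu> a \<in> Lclass eps B" using assms(2,3) by (simp add: models_def)
  then have "0 \<le> KL (\<mu> a) \<kappa>"
    using assms(4) by (intro KL_nonneg prob_real_if_Lclass)
  then show ?thesis using prob_simplex_nonneg[OF assms(1,2)] by simp
qed

lemma not_Aset_1_obtains_arm:
  assumes "\<nu> \<in> models eps B K - Aset p eps B K 1"
  obtains i where "i \<in> {2..K}" "cvar p (\<nu> i) \<le> cvar p (\<nu> 1)"
proof -
  obtain i where "i \<in> {1..K}" "i \<noteq> 1" "\<not> cvar p (\<nu> 1) < cvar p (\<nu> i)"
    using assms by (auto simp: Aset_def)
  then show ?thesis using that[of i] by simp
qed

lemma weighted_KL_update_two_arms: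
  assumes "\<mu> \<in> models eps B K" "j \<in> {2..K}"
  shows "(\<Sum>a=1..K. ereal (t a) * KL (\<mu> a) ((\<mu>(1 := \<kappa>\<^sub>1, j := \<kappa>\<^sub>j)) a))
       = ereal (t 1) * KL (\<mu> 1) \<kappa>\<^sub>1 + ereal (t j) * KL (\<mu> j) \<kappa>\<^sub>j"
proof -
  let ?\<nu> = "\<mu>(1 := \<kappa>\<^sub>1, j := \<kappa>\<^sub>j)"
  have arms: "{1, j} \<subseteq> {1..K}" "j \<noteq> 1" using assms(2) by auto
  have "(\<Sum>a=1..K. ereal (t a) * KL (\<mu> a) (?\<nu> a))
      = (\<Sum>a\<in>{1..K} - {1, j}. ereal (t a) * KL (\<mu> a) (?\<nu> a))
        + (\<Sum>a\<in>{1, j}. ereal (t a) * KL (\<mu> a) (?\<nu> a))"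
    using arms by (intro sum.subset_diff) auto
  also have "(\<Sum>a\<in>{1..K} - {1, j}. ereal (t a) * KL (\<mu> a) (?\<nu> a)) = 0"
    using assms(1) by (intro sum.neutral) (auto simp: models_def KL_self prob_real_if_Lclass)
  also have "(\<Sum>a\<in>{1, j}. ereal (t a) * KL (\<mu> a) (?\<nu> a))
      = ereal (t 1) * KL (\<mu> 1) \<kappa>\<^sub>1 + ereal (t j) * KL (\<mu> j) \<kappa>\<^sub>j"
    using arms by simp
  finally show ?thesis by (simp only: add_0_left)
qed

lemma two_arm_INF_le_weighted_KL:
  assumes \<mu>: "\<mu> \<in> models eps B K" and t: "t \<in> prob_simplex K"
    and \<nu>: "\<nu> \<in> models eps B K - Aset p eps B K 1"
  shows "(INF j\<in>{2..K}. INF xy\<in>{(x::real, y::real). x \<le> y}.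
            ereal (t 1) * KLinfU p eps B (\<mu> 1) (snd xy) + ereal (t j) * KLinfL p eps B (\<mu> j) (fst xy))
         \<le> (\<Sum>a=1..K. ereal (t a) * KL (\<mu> a) (\<nu> a))"
proof -
  obtain i where i: "i \<in> {2..K}" "cvar p (\<nu> i) \<le> cvar p (\<nu> 1)"
    using not_Aset_1_obtains_arm[OF \<nu>] .
  have arms: "{1, i} \<subseteq> {1..K}" "i \<noteq> 1" using i by auto
  have \<nu>L: "\<nu> a \<in> Lclass eps B" if "a \<in> {1..K}" for a
    using \<nu> that by (simp add: models_def)
  have "(INF j\<in>{2..K}. INF xy\<in>{(x::real, y::real). x \<le> y}.
            ereal (t 1) * KLinfU p eps B (\<mu> 1) (snd xy) + ereal (t j) * KLinfL p eps B (\<mu> j) (fst xy))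
        \<le> ereal (t 1) * KLinfU p eps B (\<mu> 1) (cvar p (\<nu> 1))
          + ereal (t i) * KLinfL p eps B (\<mu> i) (cvar p (\<nu> i))"
    using i by (intro INF_lower2[OF i(1)] INF_lower2[of "(cvar p (\<nu> i), cvar p (\<nu> 1))"]) auto
  also have "\<dots> \<le> ereal (t 1) * KL (\<mu> 1) (\<nu> 1) + ereal (t i) * KL (\<mu> i) (\<nu> i)"
    unfolding KLinfU_def KLinfL_def using arms t \<nu>L
    by (intro add_mono ereal_mult_left_mono INF_lower) (auto simp: prob_simplex_nonneg)
  also have "\<dots> = (\<Sum>a\<in>{1, i}. ereal (t a) * KL (\<mu> a) (\<nu> a))" using arms by simp
  also have "\<dots> \<le> (\<Sum>a=1..K. ereal (t a) * KL (\<mu> a) (\<nu> a))"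
    using arms \<mu> t \<nu>L by (intro sum_mono2 weighted_KL_nonneg) auto
  finally show ?thesis .
qed

lemma INF_alternatives_le_two_arm:
  assumes \<mu>: "\<mu> \<in> models eps B K" and t: "t \<in> prob_simplex K"
    and j: "j \<in> {2..K}" and "x \<le> y"
  shows "(INF \<nu>\<in>models eps B K - Aset p eps B K 1. \<Sum>a=1..K. ereal (t a) * KL (\<mu> a) (\<nu> a))
         \<le> ereal (t 1) * KLinfU p eps B (\<mu> 1) y + ereal (t j) * KLinfL p eps B (\<mu> j) x"
    (is "?L \<le> _")
proof -
  have arms: "1 \<in> {1..K}" "j \<in> {1..K}" "j \<noteq> 1" using j by auto
  have \<mu>L: "\<mu> a \<in> Lclass eps B" if "a \<in> {1..K}" for a
    using \<mu> that by (simp add: models_def)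
  have pair: "?L \<le> ereal (t 1) * KL (\<mu> 1) \<kappa>\<^sub>1 + ereal (t j) * KL (\<mu> j) \<kappa>\<^sub>j"
    if "\<kappa>\<^sub>1 \<in> Lclass eps B" "\<kappa>\<^sub>j \<in> Lclass eps B" "cvar p \<kappa>\<^sub>j \<le> cvar p \<kappa>\<^sub>1" for \<kappa>\<^sub>1 \<kappa>\<^sub>j
  proof -
    have "\<mu>(1 := \<kappa>\<^sub>1, j := \<kappa>\<^sub>j) \<in> models eps B K - Aset p eps B K 1"
      using that arms \<mu>L by (auto simp: models_def Aset_def)
    then have "?L \<le> (\<Sum>a=1..K. ereal (t a) * KL (\<mu> a) ((\<mu>(1 := \<kappa>\<^sub>1, j := \<kappa>\<^sub>j)) a))"
      by (rule INF_lower)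
    also have "\<dots> = ereal (t 1) * KL (\<mu> 1) \<kappa>\<^sub>1 + ereal (t j) * KL (\<mu> j) \<kappa>\<^sub>j"
      by (rule weighted_KL_update_two_arms[OF \<mu> j])
    finally show ?thesis .
  qed
  let ?U = "{\<kappa> \<in> Lclass eps B. y \<le> cvar p \<kappa>}" and ?D = "{\<kappa> \<in> Lclass eps B. cvar p \<kappa> \<le> x}"
  have U: "KLinfU p eps B (\<mu> 1) y = (INF \<kappa>\<in>?U. KL (\<mu> 1) \<kappa>)"
    and D: "KLinfL p eps B (\<mu> j) x = (INF \<kappa>\<in>?D. KL (\<mu> j) \<kappa>)"
    by (simp_all add: KLinfU_def KLinfL_def)
  \<comment> \<open>A zero weight kills its term even when the constraint set is empty (\<open>0 * \<infinity> = 0\<close>),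
    so that arm must then reuse the other arm's measure.\<close>
  consider "t 1 = 0" | "t j = 0" | "0 < t 1" "0 < t j"
    using t arms by (force simp: prob_simplex_def less_le)
  then show ?thesis
  proof cases
    case 1
    have "?L \<le> ereal (t j) * (INF \<kappa>\<in>?D. KL (\<mu> j) \<kappa>)"
    proof (rule ereal_le_mult_INF)
      show "?L \<le> ereal (t j) * KL (\<mu> j) \<kappa>" if "\<kappa> \<in> ?D" for \<kappa>
        using pair[of \<kappa> \<kappa>] that 1 by (simp add: zero_ereal_def[symmetric])
      show "?L \<le> 0" if "t j = 0"
        using pair[of "\<mu> j" "\<mu> j"] \<mu>L arms 1 that by (simp add: zero_ereal_def[symmetric])
    qed (use t arms in \<open>simp add: prob_simplex_nonneg\<close>)
    then show ?thesis using 1 D by (simp add: zero_ereal_def[symmetric])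
  next
    case 2
    have "?L \<le> ereal (t 1) * (INF \<kappa>\<in>?U. KL (\<mu> 1) \<kappa>)"
    proof (rule ereal_le_mult_INF)
      show "?L \<le> ereal (t 1) * KL (\<mu> 1) \<kappa>" if "\<kappa> \<in> ?U" for \<kappa>
        using pair[of \<kappa> \<kappa>] that 2 by (simp add: zero_ereal_def[symmetric])
      show "?L \<le> 0" if "t 1 = 0"
        using pair[of "\<mu> j" "\<mu> j"] \<mu>L arms 2 that by (simp add: zero_ereal_def[symmetric])
    qed (use t arms in \<open>simp add: prob_simplex_nonneg\<close>)
    then show ?thesis using 2 U by (simp add: zero_ereal_def[symmetric])
  next
    case 3
    have "?L \<le> (INF \<kappa>\<in>?U. ereal (t 1) * KL (\<mu> 1) \<kappa>) + (INF \<kappa>\<in>?D. ereal (t j) * KL (\<mu> j) \<kappa>)"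
      using \<open>x \<le> y\<close> \<mu> t arms
      by (intro ereal_le_INF_add_INF pair weighted_KL_nonneg) auto
    then show ?thesis using 3 U D by (simp add: ereal_mult_INF)
  qed
qed

lemma INF_alternatives_eq_two_arm_INF:
  assumes \<mu>: "\<mu> \<in> models eps B K" and t: "t \<in> prob_simplex K"
  shows "(INF \<nu>\<in>models eps B K - Aset p eps B K 1. \<Sum>a=1..K. ereal (t a) * KL (\<mu> a) (\<nu> a))
       = (INF j\<in>{2..K}. INF xy\<in>{(x::real, y::real). x \<le> y}.
            ereal (t 1) * KLinfU p eps B (\<mu> 1) (snd xy) + ereal (t j) * KLinfL p eps B (\<mu> j) (fst xy))"
    (is "?L = _")
proof (rule antisym)
  have "?L \<le> ereal (t 1) * KLinfU p eps B (\<mu> 1) (snd xy) + ereal (t j) * KLinfL p eps B (\<mu> j) (fst xy)"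
    if j: "j \<in> {2..K}" and xy: "xy \<in> {(x::real, y::real). x \<le> y}" for j xy
  proof -
    obtain x y where "xy = (x, y)" "x \<le> y" using xy by auto
    then show ?thesis using INF_alternatives_le_two_arm[OF \<mu> t j] by simp
  qed
  then show "?L \<le> (INF j\<in>{2..K}. INF xy\<in>{(x::real, y::real). x \<le> y}.
            ereal (t 1) * KLinfU p eps B (\<mu> 1) (snd xy) + ereal (t j) * KLinfL p eps B (\<mu> j) (fst xy))"
    by (intro INF_greatest)
qed (use \<mu> t in \<open>intro INF_greatest two_arm_INF_le_weighted_KL\<close>)

theorem lemma2:
  fixes p eps B :: real and K :: nat and \<mu> :: "nat \<Rightarrow> real measure"
  assumes "0 < p" "p < 1" "0 < eps" "0 < B" "2 \<le> K"
    and "\<mu> \<in> Aset p eps B K 1"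
  shows "(\<forall>t\<in>prob_simplex K.
            (INF \<nu>\<in>models eps B K - Aset p eps B K 1. \<Sum>a=1..K. ereal (t a) * KL (\<mu> a) (\<nu> a))
          = (INF j\<in>{2..K}. INF xy\<in>{(x::real, y::real). x \<le> y}.
               ereal (t 1) * KLinfU p eps B (\<mu> 1) (snd xy) + ereal (t j) * KLinfL p eps B (\<mu> j) (fst xy)))
       \<and> (SUP t\<in>prob_simplex K.
            INF \<nu>\<in>models eps B K - Aset p eps B K 1. \<Sum>a=1..K. ereal (t a) * KL (\<mu> a) (\<nu> a))
          = (SUP t\<in>prob_simplex K. INF j\<in>{2..K}. INF xy\<in>{(x::real, y::real). x \<le> y}.
               ereal (t 1) * KLinfU p eps B (\<mu> 1) (snd xy) + ereal (t j) * KLinfL p eps B (\<mu> j) (fst xy))"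
proof -
  have "\<mu> \<in> models eps B K" using assms(6) by (simp add: Aset_def)
  note eq = INF_alternatives_eq_two_arm_INF[OF this]
  show ?thesis by (intro conjI ballI SUP_cong refl eq)
qed

end
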